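(* Let $n$ training samples carry labels in $\{1,\dots,K\}$ with indicator matrix $F\in\mathbb{R}^{K\times n}$ (rows $F_1,\dots,F_K$). Let the basis $G_1,\dots,G_r$ ($r\le n$) be a subset of the training samples with every class containing at least one basis vector, and let $F_{G_i}$ be the class indicator of $G_i$. Let $W\in\mathbb{R}^{r\times n}$ be entrywise nonnegative with positive column sums, $S=\operatorname{diag}(\mathbf{1}^TW)$, $\tilde W=WS^{-1}$ of full row rank, and suppose $W_{ij}=0$ whenever $F_{G_i}\neq F_j$. For each class $k$ let $\tilde W^{(k)}$ be the submatrix of $\tilde W$ with rows indexed by the basis vectors of class $k$ and columns indexed by the training samples of class $k$. Then the following are equivalent: (i) for every $k$, $F_k/\|F_k\|_2$ is a right singular vector of $\tilde W$ whose singular value equals the largest singular value of $\tilde W^{(k)}$; (ii) the row sums of $\tilde W$ are equal within each class: $\sum_l\tilde W_{il}=\sum_l\tilde W_{jl}$ for all $i,j$ with $F_{G_i}=F_{G_j}$.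
   Context: The columns of $F$ are standard basis vectors of $\mathbb{R}^K$: $F_j=e_k$ iff sample $j$ is in class $k$. Under the stated (ideal bipartite-graph) condition, after grouping rows and columns by class, $\tilde W$ is block diagonal with blocks $\tilde W^{(k)}$; statement (i) is the meaning of "the rows of $F$ are the right singular vectors of $\tilde W$ corresponding to the largest singular values" (of the respective class blocks). *)

theory Defs
  imports Complex_Main
begin

text \<open>Real matrices are represented as functions A :: 'a \<Rightarrow> 'b \<Rightarrow> real, considered on
  a finite row index set I and a finite column index set J (so a submatrix is just the
  same function on smaller index sets).\<close>

definition sing_triple ::
  "'a set \<Rightarrow> 'b set \<Rightarrow> ('a \<Rightarrow> 'b \<Rightarrow> real) \<Rightarrow> real \<Rightarrow> ('a \<Rightarrow> real) \<Rightarrow> ('b \<Rightarrow> real) \<Rightarrow> bool"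
  where
  "sing_triple I J A \<sigma> u v \<longleftrightarrow>
     \<sigma> \<ge> 0 \<and> (\<Sum>i\<in>I. (u i)\<^sup>2) = 1 \<and> (\<Sum>j\<in>J. (v j)\<^sup>2) = 1 \<and>
     (\<forall>i\<in>I. (\<Sum>j\<in>J. A i j * v j) = \<sigma> * u i) \<and>
     (\<forall>j\<in>J. (\<Sum>i\<in>I. A i j * u i) = \<sigma> * v j)"

definition right_singular_vector ::
  "'a set \<Rightarrow> 'b set \<Rightarrow> ('a \<Rightarrow> 'b \<Rightarrow> real) \<Rightarrow> real \<Rightarrow> ('b \<Rightarrow> real) \<Rightarrow> bool"
  where "right_singular_vector I J A \<sigma> v \<longleftrightarrow> (\<exists>u. sing_triple I J A \<sigma> u v)"

definition singular_values :: "'a set \<Rightarrow> 'b set \<Rightarrow> ('a \<Rightarrow> 'b \<Rightarrow> real) \<Rightarrow> real set"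
  where "singular_values I J A = {\<sigma>. \<exists>u v. sing_triple I J A \<sigma> u v}"

definition largest_singular_value :: "'a set \<Rightarrow> 'b set \<Rightarrow> ('a \<Rightarrow> 'b \<Rightarrow> real) \<Rightarrow> real"
  where "largest_singular_value I J A = Max (singular_values I J A)"

definition col_normalize :: "nat \<Rightarrow> (nat \<Rightarrow> nat \<Rightarrow> real) \<Rightarrow> nat \<Rightarrow> nat \<Rightarrow> real"
  where "col_normalize r W i j = W i j / (\<Sum>l<r. W l j)"

end

theory Submission
  imports Defs "HOL-Analysis.Convex"
begin

text \<open>Write \<open>I\<^sub>k\<close>, \<open>J\<^sub>k\<close> for the basis vectors and the samples of class \<open>k\<close>. The matrix
  \<open>A = W S\<^sup>-\<^sup>1\<close> is nonnegative, has unit column sums and vanishes off the blocks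
  \<open>I\<^sub>k \<times> J\<^sub>k\<close>. If the normalised indicator \<open>v\<close> of \<open>J\<^sub>k\<close> is a right singular vector with
  value \<open>\<sigma>\<close>, then \<open>A\<^sup>T A v = \<sigma>\<^sup>2 v\<close> and the unit column sums give
  \<open>\<Sum>\<^sub>i (\<rho>\<^sub>i - \<sigma>\<^sup>2) A\<^sub>i\<^sub>j = 0\<close> for every column \<open>j\<close>, where \<open>\<rho>\<^sub>i\<close> are the row sums on \<open>I\<^sub>k\<close>;
  full row rank forces \<open>\<rho>\<^sub>i = \<sigma>\<^sup>2\<close>.
  Conversely, if the rows of the block have the common sum \<open>c\<close>, double counting gives
  \<open>c |I\<^sub>k| = |J\<^sub>k|\<close> and the normalised indicators of \<open>I\<^sub>k\<close> and \<open>J\<^sub>k\<close> form a singular pair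
  with value \<open>\<surd>c\<close>; by Cauchy-Schwarz (Schur's bound \<open>\<sigma>\<^sup>2 \<le> max row sum \<times> max column sum\<close>)
  no singular value of the block exceeds \<open>\<surd>c\<close>. For the maximum to be meaningful the set of
  singular values must be finite, which holds because right singular vectors for distinct
  values are orthogonal.\<close>

lemma sing_triple_cong:
  assumes "\<And>i. i \<in> I \<Longrightarrow> u i = u' i" and "\<And>j. j \<in> J \<Longrightarrow> v j = v' j"
  shows "sing_triple I J A \<sigma> u v \<longleftrightarrow> sing_triple I J A \<sigma> u' v'"
  using assms unfolding sing_triple_def by (simp cong: sum.cong)

lemma sing_triple_le_sqrt_row_sum:
  fixes A :: "'a \<Rightarrow> 'b \<Rightarrow> real"
  assumes nonneg: "\<And>i j. i \<in> I \<Longrightarrow> j \<in> J \<Longrightarrow> A i j \<ge> 0"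
    and row: "\<And>i. i \<in> I \<Longrightarrow> (\<Sum>j\<in>J. A i j) = c"
    and col: "\<And>j. j \<in> J \<Longrightarrow> (\<Sum>i\<in>I. A i j) = 1"
    and st: "sing_triple I J A \<sigma> u v"
  shows "\<sigma> \<le> sqrt c"
proof -
  from st have \<sigma>_nonneg: "\<sigma> \<ge> 0" and u_unit: "(\<Sum>i\<in>I. (u i)\<^sup>2) = 1"
    and v_unit: "(\<Sum>j\<in>J. (v j)\<^sup>2) = 1"
    and Av: "\<And>i. i \<in> I \<Longrightarrow> (\<Sum>j\<in>J. A i j * v j) = \<sigma> * u i"
    unfolding sing_triple_def by auto
  have row_bound: "(\<Sum>j\<in>J. A i j * v j)\<^sup>2 \<le> c * (\<Sum>j\<in>J. A i j * (v j)\<^sup>2)" if i: "i \<in> I" for i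
  proof -
    have "(\<Sum>j\<in>J. A i j * v j) = (\<Sum>j\<in>J. sqrt (A i j) * (sqrt (A i j) * v j))"
      by (rule sum.cong) (use nonneg[OF i] in \<open>auto\<close>)
    hence "(\<Sum>j\<in>J. A i j * v j)\<^sup>2
        \<le> (\<Sum>j\<in>J. (sqrt (A i j))\<^sup>2) * (\<Sum>j\<in>J. (sqrt (A i j) * v j)\<^sup>2)"
      using Cauchy_Schwarz_ineq_sum by metis
    also have "(\<Sum>j\<in>J. (sqrt (A i j))\<^sup>2) = c"
      using row[OF i] nonneg[OF i] by simp
    also have "(\<Sum>j\<in>J. (sqrt (A i j) * v j)\<^sup>2) = (\<Sum>j\<in>J. A i j * (v j)\<^sup>2)"
      by (rule sum.cong) (use nonneg[OF i] in \<open>auto simp: power_mult_distrib\<close>)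
    finally show ?thesis .
  qed
  have "\<sigma>\<^sup>2 = (\<Sum>i\<in>I. (\<sigma> * u i)\<^sup>2)"
    by (simp add: power_mult_distrib u_unit flip: sum_distrib_left)
  also have "\<dots> = (\<Sum>i\<in>I. (\<Sum>j\<in>J. A i j * v j)\<^sup>2)"
    using Av by simp
  also have "\<dots> \<le> (\<Sum>i\<in>I. c * (\<Sum>j\<in>J. A i j * (v j)\<^sup>2))"
    by (rule sum_mono) (rule row_bound)
  also have "\<dots> = c * (\<Sum>j\<in>J. (\<Sum>i\<in>I. A i j) * (v j)\<^sup>2)"
    by (simp add: sum_distrib_left sum_distrib_right sum.swap[of _ I J] mult.assoc)
  also have "\<dots> = c"
    using col v_unit by simp
  finally show ?thesis
    using \<sigma>_nonneg real_le_rsqrt by blast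
qed

lemma orthonormal_sum_sq_le_one:
  fixes w :: "'e \<Rightarrow> 'b \<Rightarrow> real"
  assumes "finite J" and "finite F"
    and unit: "\<And>e. e \<in> F \<Longrightarrow> (\<Sum>l\<in>J. (w e l)\<^sup>2) = 1"
    and orth: "\<And>e e'. e \<in> F \<Longrightarrow> e' \<in> F \<Longrightarrow> e \<noteq> e' \<Longrightarrow> (\<Sum>l\<in>J. w e l * w e' l) = 0"
    and "j \<in> J"
  shows "(\<Sum>e\<in>F. (w e j)\<^sup>2) \<le> 1"
proof -
  \<comment> \<open>Bessel's inequality for the unit vector at \<open>j\<close>, via its projection \<open>P\<close> onto the span of \<open>F\<close>.\<close>
  define a where "a e = w e j" for e
  define P where "P l = (\<Sum>e\<in>F. a e * w e l)" for l
  define d where "d l = (if l = j then 1 else (0::real))" for l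
  have inner: "(\<Sum>l\<in>J. w e l * w e' l) = (if e = e' then 1 else 0)" if "e \<in> F" "e' \<in> F" for e e'
    using unit[OF that(1)] orth[OF that] by (auto simp: power2_eq_square)
  have "0 \<le> (\<Sum>l\<in>J. (d l - P l)\<^sup>2)"
    by (simp add: sum_nonneg)
  also have "\<dots> = (\<Sum>l\<in>J. (d l)\<^sup>2) - 2 * (\<Sum>l\<in>J. d l * P l) + (\<Sum>l\<in>J. (P l)\<^sup>2)"
    by (simp add: power2_eq_square algebra_simps sum.distrib sum_subtractf sum_distrib_left)
  also have "(\<Sum>l\<in>J. (d l)\<^sup>2) = 1"
    using assms(1,5) by (simp add: d_def if_distrib[where f = "\<lambda>x. x\<^sup>2"] cong: if_cong)
  also have "(\<Sum>l\<in>J. d l * P l) = P j"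
    using assms(1,5) by (simp add: d_def if_distrib[where f = "\<lambda>x. x * P _"] cong: if_cong)
  also have "P j = (\<Sum>e\<in>F. (a e)\<^sup>2)"
    by (simp add: P_def a_def power2_eq_square)
  also have "(\<Sum>l\<in>J. (P l)\<^sup>2) = (\<Sum>e\<in>F. \<Sum>e'\<in>F. a e * a e' * (\<Sum>l\<in>J. w e l * w e' l))"
    unfolding P_def power2_eq_square sum_product
    by (simp add: sum_distrib_left sum.swap[of _ J] mult_ac)
  also have "\<dots> = (\<Sum>e\<in>F. (a e)\<^sup>2)"
    using assms(2) by (simp add: inner power2_eq_square if_distrib cong: if_cong)
  finally show ?thesis
    by (simp add: a_def)
qed

lemma finite_orthonormal_family:
  fixes w :: "'e \<Rightarrow> 'b \<Rightarrow> real"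
  assumes "finite J"
    and unit: "\<And>e. e \<in> E \<Longrightarrow> (\<Sum>l\<in>J. (w e l)\<^sup>2) = 1"
    and orth: "\<And>e e'. e \<in> E \<Longrightarrow> e' \<in> E \<Longrightarrow> e \<noteq> e' \<Longrightarrow> (\<Sum>l\<in>J. w e l * w e' l) = 0"
  shows "finite E"
proof -
  have "card F \<le> card J" if "F \<subseteq> E" "finite F" for F
  proof -
    have "real (card F) = (\<Sum>e\<in>F. \<Sum>l\<in>J. (w e l)\<^sup>2)"
      using unit that(1) by (simp add: subset_iff)
    also have "\<dots> = (\<Sum>l\<in>J. \<Sum>e\<in>F. (w e l)\<^sup>2)"
      by (rule sum.swap)
    also have "\<dots> \<le> (\<Sum>l\<in>J. 1)"
      by (intro sum_mono orthonormal_sum_sq_le_one[OF \<open>finite J\<close> \<open>finite F\<close>])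
         (use unit orth that(1) in blast)+
    finally show ?thesis
      by simp
  qed
  thus ?thesis
    using finite_if_finite_subsets_card_bdd by blast
qed

lemma sing_triple_inner_eq:
  assumes "sing_triple I J A s u v" and "sing_triple I J A s' u' v'"
  shows "s * (\<Sum>j\<in>J. v j * v' j) = s' * (\<Sum>i\<in>I. u i * u' i)"
proof -
  have "s * (\<Sum>j\<in>J. v j * v' j) = (\<Sum>j\<in>J. (s * v j) * v' j)"
    by (simp add: sum_distrib_left mult_ac)
  also have "\<dots> = (\<Sum>j\<in>J. (\<Sum>i\<in>I. A i j * u i) * v' j)"
    using assms(1) unfolding sing_triple_def by simp
  also have "\<dots> = (\<Sum>i\<in>I. u i * (\<Sum>j\<in>J. A i j * v' j))"
    by (simp add: sum_distrib_left sum_distrib_right sum.swap[of _ J] mult_ac)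
  also have "\<dots> = (\<Sum>i\<in>I. u i * (s' * u' i))"
    using assms(2) unfolding sing_triple_def by simp
  finally show ?thesis
    by (simp add: sum_distrib_left mult_ac)
qed

lemma sing_triple_right_orthogonal:
  assumes st: "sing_triple I J A s u v" and st': "sing_triple I J A s' u' v'" and "s \<noteq> s'"
  shows "(\<Sum>j\<in>J. v j * v' j) = 0"
proof -
  have "s * (\<Sum>i\<in>I. u i * u' i) = s' * (\<Sum>j\<in>J. v j * v' j)"
    using sing_triple_inner_eq[OF st' st] by (simp add: mult.commute)
  hence "s * s * (\<Sum>j\<in>J. v j * v' j) = s' * s' * (\<Sum>j\<in>J. v j * v' j)"
    using sing_triple_inner_eq[OF st st'] by (metis mult.assoc mult.commute)
  moreover have "s * s \<noteq> s' * s'"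
  proof
    assume "s * s = s' * s'"
    hence "sqrt (s * s) = sqrt (s' * s')"
      by simp
    thus False
      using st st' \<open>s \<noteq> s'\<close> unfolding sing_triple_def by simp
  qed
  ultimately show ?thesis
    by simp
qed

lemma finite_singular_values:
  assumes "finite J"
  shows "finite (singular_values I J A)"
proof -
  have "\<forall>s\<in>singular_values I J A. \<exists>v u. sing_triple I J A s u v"
    unfolding singular_values_def by blast
  then obtain V where V: "\<forall>s\<in>singular_values I J A. \<exists>u. sing_triple I J A s u (V s)"
    by (rule bchoice[elim_format]) blast
  show ?thesis
  proof (rule finite_orthonormal_family[OF assms, of _ V])
    show "(\<Sum>l\<in>J. (V s l)\<^sup>2) = 1" if "s \<in> singular_values I J A" for s
      using V that unfolding sing_triple_def by blast
    show "(\<Sum>l\<in>J. V s l * V s' l) = 0"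
      if sv: "s \<in> singular_values I J A" "s' \<in> singular_values I J A" and "s \<noteq> s'" for s s'
    proof -
      obtain u u' where "sing_triple I J A s u (V s)" "sing_triple I J A s' u' (V s')"
        using V sv by blast
      thus ?thesis
        using sing_triple_right_orthogonal \<open>s \<noteq> s'\<close> by blast
    qed
  qed
qed

lemma sing_triple_const_row_sums:
  fixes A :: "'a \<Rightarrow> 'b \<Rightarrow> real"
  assumes "finite I" and "finite J" and "J \<noteq> {}"
    and row: "\<And>i. i \<in> I \<Longrightarrow> (\<Sum>j\<in>J. A i j) = c"
    and col: "\<And>j. j \<in> J \<Longrightarrow> (\<Sum>i\<in>I. A i j) = 1"
  shows "sing_triple I J A (sqrt c) (\<lambda>i. 1 / sqrt (card I)) (\<lambda>j. 1 / sqrt (card J))"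
proof -
  have "c * card I = (\<Sum>i\<in>I. \<Sum>j\<in>J. A i j)"
    using row by simp
  also have "\<dots> = (\<Sum>j\<in>J. \<Sum>i\<in>I. A i j)"
    by (rule sum.swap)
  also have "\<dots> = card J"
    using col by simp
  finally have double_count: "c * card I = card J" .
  have "card J > 0"
    using assms(2,3) by (simp add: card_gt_0_iff)
  with double_count have "c * card I > 0"
    by simp
  hence "card I > 0" and "c > 0"
    by (auto simp: zero_less_mult_iff)
  define s a b where "s = sqrt c" and "a = sqrt (card I)" and "b = sqrt (card J)"
  have "s > 0" "a > 0" "b > 0" "s * s = c" "a * a = card I" "b * b = card J"
    using \<open>c > 0\<close> \<open>card I > 0\<close> \<open>card J > 0\<close> by (simp_all add: s_def a_def b_def)
  have "s * a = b"
    unfolding s_def a_def b_def using double_count by (simp flip: real_sqrt_mult)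
  show ?thesis
    unfolding sing_triple_def s_def[symmetric] a_def[symmetric] b_def[symmetric]
  proof (intro conjI ballI)
    show "0 \<le> s"
      using \<open>s > 0\<close> by simp
    show "(\<Sum>i\<in>I. (1 / a)\<^sup>2) = 1" "(\<Sum>j\<in>J. (1 / b)\<^sup>2) = 1"
      using \<open>a * a = card I\<close> \<open>b * b = card J\<close> \<open>card I > 0\<close> \<open>card J > 0\<close>
      by (simp_all add: power2_eq_square)
    show "(\<Sum>j\<in>J. A i j * (1 / b)) = s * (1 / a)" if "i \<in> I" for i
    proof -
      have "(\<Sum>j\<in>J. A i j * (1 / b)) = s * s / (s * a)"
        using row[OF that] \<open>s * s = c\<close> \<open>s * a = b\<close> by (simp flip: sum_divide_distrib)
      thus ?thesis
        using \<open>s > 0\<close> by simp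
    qed
    show "(\<Sum>i\<in>I. A i j * (1 / a)) = s * (1 / b)" if "j \<in> J" for j
    proof -
      have "(\<Sum>i\<in>I. A i j * (1 / a)) = s / (s * a)"
        using col[OF that] \<open>s > 0\<close> by (simp flip: sum_divide_distrib)
      thus ?thesis
        using \<open>s * a = b\<close> by simp
    qed
  qed
qed

lemma largest_singular_value_eq_sqrt_row_sum:
  fixes A :: "'a \<Rightarrow> 'b \<Rightarrow> real"
  assumes "finite I" and "finite J" and "J \<noteq> {}"
    and nonneg: "\<And>i j. i \<in> I \<Longrightarrow> j \<in> J \<Longrightarrow> A i j \<ge> 0"
    and row: "\<And>i. i \<in> I \<Longrightarrow> (\<Sum>j\<in>J. A i j) = c"
    and col: "\<And>j. j \<in> J \<Longrightarrow> (\<Sum>i\<in>I. A i j) = 1"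
  shows "largest_singular_value I J A = sqrt c"
  unfolding largest_singular_value_def
proof (rule Max_eqI)
  show "finite (singular_values I J A)"
    using \<open>finite J\<close> by (rule finite_singular_values)
  show "sqrt c \<in> singular_values I J A"
    unfolding singular_values_def using sing_triple_const_row_sums[OF assms(1-3) row col] by blast
  show "\<sigma> \<le> sqrt c" if "\<sigma> \<in> singular_values I J A" for \<sigma>
    using that sing_triple_le_sqrt_row_sum[OF nonneg row col] unfolding singular_values_def by blast
qed

lemma sing_triple_extend_block:
  fixes A :: "'a \<Rightarrow> 'b \<Rightarrow> real"
  assumes "finite I" and "finite J" and "Ik \<subseteq> I" and "Jk \<subseteq> J"
    and block: "\<And>i j. i \<in> I \<Longrightarrow> j \<in> J \<Longrightarrow> (i \<in> Ik) \<noteq> (j \<in> Jk) \<Longrightarrow> A i j = 0"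
    and u_out: "\<And>i. i \<in> I - Ik \<Longrightarrow> u i = 0" and v_out: "\<And>j. j \<in> J - Jk \<Longrightarrow> v j = 0"
    and st: "sing_triple Ik Jk A s u v"
  shows "sing_triple I J A s u v"
  unfolding sing_triple_def
proof (intro conjI ballI)
  have sum_u: "(\<Sum>i\<in>I. f i * u i) = (\<Sum>i\<in>Ik. f i * u i)" for f
    by (rule sum.mono_neutral_right) (use assms(1,3) u_out in auto)
  have sum_v: "(\<Sum>j\<in>J. f j * v j) = (\<Sum>j\<in>Jk. f j * v j)" for f
    by (rule sum.mono_neutral_right) (use assms(2,4) v_out in auto)
  show "0 \<le> s"
    using st unfolding sing_triple_def by simp
  show "(\<Sum>i\<in>I. (u i)\<^sup>2) = 1" "(\<Sum>j\<in>J. (v j)\<^sup>2) = 1"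
    using st sum_u[of u] sum_v[of v] unfolding sing_triple_def by (simp_all add: power2_eq_square)
  show "(\<Sum>j\<in>J. A i j * v j) = s * u i" if "i \<in> I" for i
  proof (cases "i \<in> Ik")
    case True
    thus ?thesis
      using st sum_v[of "A i"] unfolding sing_triple_def by simp
  next
    case False
    have "(\<Sum>j\<in>Jk. A i j * v j) = 0"
      using False that assms(4) block by (auto intro!: sum.neutral)
    thus ?thesis
      using False that u_out sum_v[of "A i"] by simp
  qed
  show "(\<Sum>i\<in>I. A i j * u i) = s * v j" if "j \<in> J" for j
  proof (cases "j \<in> Jk")
    case True
    thus ?thesis
      using st sum_u[of "\<lambda>i. A i j"] unfolding sing_triple_def by simp
  next
    case False
    have "(\<Sum>i\<in>Ik. A i j * u i) = 0"
      using False that assms(3) block by (auto intro!: sum.neutral)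
    thus ?thesis
      using False that v_out sum_u[of "\<lambda>i. A i j"] by simp
  qed
qed

lemma right_singular_indicator_if_const_row_sums:
  fixes A :: "'a \<Rightarrow> 'b \<Rightarrow> real"
  assumes "finite I" and "finite J" and "Ik \<subseteq> I" and "Jk \<subseteq> J" and "Jk \<noteq> {}"
    and nonneg: "\<And>i j. i \<in> I \<Longrightarrow> j \<in> J \<Longrightarrow> A i j \<ge> 0"
    and col: "\<And>j. j \<in> J \<Longrightarrow> (\<Sum>i\<in>I. A i j) = 1"
    and block: "\<And>i j. i \<in> I \<Longrightarrow> j \<in> J \<Longrightarrow> (i \<in> Ik) \<noteq> (j \<in> Jk) \<Longrightarrow> A i j = 0"
    and row: "\<And>i. i \<in> Ik \<Longrightarrow> (\<Sum>j\<in>J. A i j) = c"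
    and v: "\<And>j. j \<in> J \<Longrightarrow> v j = (if j \<in> Jk then 1 else 0) / sqrt (card Jk)"
  shows "right_singular_vector I J A (largest_singular_value Ik Jk A) v"
proof -
  have "finite Ik" "finite Jk"
    using assms(1-4) finite_subset by blast+
  have row_k: "(\<Sum>j\<in>Jk. A i j) = c" if "i \<in> Ik" for i
    using row[OF that] sum.mono_neutral_left[OF \<open>finite J\<close> \<open>Jk \<subseteq> J\<close>, of "A i"]
      that assms(3) block by auto
  have col_k: "(\<Sum>i\<in>Ik. A i j) = 1" if "j \<in> Jk" for j
    using col[of j] sum.mono_neutral_left[OF \<open>finite I\<close> \<open>Ik \<subseteq> I\<close>, of "\<lambda>i. A i j"]
      that assms(4) block by auto
  have lsv: "largest_singular_value Ik Jk A = sqrt c"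
    by (rule largest_singular_value_eq_sqrt_row_sum[OF \<open>finite Ik\<close> \<open>finite Jk\<close> \<open>Jk \<noteq> {}\<close>])
       (use nonneg assms(3,4) row_k col_k in auto)
  define u' v' where "u' i = (if i \<in> Ik then 1 else 0) / sqrt (card Ik)"
    and "v' j = (if j \<in> Jk then 1 else 0) / sqrt (card Jk)" for i j
  have "sing_triple Ik Jk A (sqrt c) (\<lambda>i. 1 / sqrt (card Ik)) (\<lambda>j. 1 / sqrt (card Jk))"
    by (rule sing_triple_const_row_sums[OF \<open>finite Ik\<close> \<open>finite Jk\<close> \<open>Jk \<noteq> {}\<close> row_k col_k])
  hence block_triple: "sing_triple Ik Jk A (sqrt c) u' v'"
    using sing_triple_cong[of Ik u' "\<lambda>i. 1 / sqrt (card Ik)" Jk v' "\<lambda>j. 1 / sqrt (card Jk)"]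
    by (simp add: u'_def v'_def)
  have "sing_triple I J A (sqrt c) u' v'"
    by (rule sing_triple_extend_block[OF assms(1-4) block _ _ block_triple]) (simp_all add: u'_def v'_def)
  hence "sing_triple I J A (sqrt c) u' v"
    using sing_triple_cong[of I u' u' J v v'] v by (simp add: v'_def)
  thus ?thesis
    unfolding right_singular_vector_def lsv by blast
qed

lemma row_sum_eq_sq_if_right_singular_indicator:
  fixes A :: "'a \<Rightarrow> 'b \<Rightarrow> real"
  assumes col: "\<And>j. j \<in> J \<Longrightarrow> (\<Sum>i\<in>I. A i j) = 1"
    and block: "\<And>i j. i \<in> I \<Longrightarrow> j \<in> J \<Longrightarrow> (i \<in> Ik) \<noteq> (j \<in> Jk) \<Longrightarrow> A i j = 0"
    and rank: "\<forall>c. (\<forall>j\<in>J. (\<Sum>i\<in>I. c i * A i j) = 0) \<longrightarrow> (\<forall>i\<in>I. c i = 0)"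
    and v: "\<And>j. j \<in> J \<Longrightarrow> v j = (if j \<in> Jk then \<beta> else 0)" and "\<beta> \<noteq> 0"
    and st: "sing_triple I J A \<sigma> u v"
    and "i \<in> I" and "i \<in> Ik"
  shows "(\<Sum>j\<in>J. A i j) = \<sigma>\<^sup>2"
proof -
  define \<rho> where "\<rho> i = (\<Sum>j\<in>J. A i j)" for i
  have Av: "\<sigma> * u i = \<beta> * \<rho> i" if "i \<in> I" "i \<in> Ik" for i
  proof -
    have "\<sigma> * u i = (\<Sum>j\<in>J. A i j * v j)"
      using st that by (simp add: sing_triple_def)
    also have "\<dots> = (\<Sum>j\<in>J. \<beta> * A i j)"
      by (rule sum.cong) (use block v that in auto)
    finally show ?thesis
      by (simp add: \<rho>_def sum_distrib_left)
  qed
  have AtAv: "(\<Sum>i\<in>I. A i j * (if i \<in> Ik then \<rho> i else 0)) = \<sigma>\<^sup>2" if "j \<in> J" "j \<in> Jk" for j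
  proof -
    have "\<beta> * \<sigma>\<^sup>2 = \<sigma> * (\<sigma> * v j)"
      using v that by (simp add: power2_eq_square)
    also have "\<dots> = \<sigma> * (\<Sum>i\<in>I. A i j * u i)"
      using st that by (simp add: sing_triple_def)
    also have "\<dots> = (\<Sum>i\<in>I. A i j * (\<sigma> * u i))"
      by (simp add: sum_distrib_left mult_ac)
    also have "\<dots> = (\<Sum>i\<in>I. \<beta> * (A i j * (if i \<in> Ik then \<rho> i else 0)))"
      by (rule sum.cong) (use Av block that in auto)
    finally show ?thesis
      using \<open>\<beta> \<noteq> 0\<close> by (simp flip: sum_distrib_left)
  qed
  define d where "d i = (if i \<in> Ik then \<rho> i - \<sigma>\<^sup>2 else 0)" for i
  have "\<forall>j\<in>J. (\<Sum>i\<in>I. d i * A i j) = 0"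
  proof
    fix j assume "j \<in> J"
    show "(\<Sum>i\<in>I. d i * A i j) = 0"
    proof (cases "j \<in> Jk")
      case True
      have "(\<Sum>i\<in>I. d i * A i j)
          = (\<Sum>i\<in>I. A i j * (if i \<in> Ik then \<rho> i else 0) - \<sigma>\<^sup>2 * A i j)"
        by (rule sum.cong) (use True \<open>j \<in> J\<close> block in \<open>auto simp: d_def algebra_simps\<close>)
      also have "\<dots> = 0"
        using AtAv[OF \<open>j \<in> J\<close> True] col[OF \<open>j \<in> J\<close>]
        by (simp add: sum_subtractf flip: sum_distrib_left)
      finally show ?thesis .
    next
      case False
      thus ?thesis
        using \<open>j \<in> J\<close> block by (auto simp: d_def intro!: sum.neutral)
    qed
  qed
  hence "d i = 0"
    using rank \<open>i \<in> I\<close> by blast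
  thus ?thesis
    using \<open>i \<in> Ik\<close> by (simp add: d_def \<rho>_def)
qed

lemma right_singular_indicator_iff_const_row_sums:
  fixes A :: "'a \<Rightarrow> 'b \<Rightarrow> real"
  assumes "finite I" and "finite J" and "Ik \<subseteq> I" and "Jk \<subseteq> J" and "Ik \<noteq> {}" and "Jk \<noteq> {}"
    and nonneg: "\<And>i j. i \<in> I \<Longrightarrow> j \<in> J \<Longrightarrow> A i j \<ge> 0"
    and col: "\<And>j. j \<in> J \<Longrightarrow> (\<Sum>i\<in>I. A i j) = 1"
    and block: "\<And>i j. i \<in> I \<Longrightarrow> j \<in> J \<Longrightarrow> (i \<in> Ik) \<noteq> (j \<in> Jk) \<Longrightarrow> A i j = 0"
    and rank: "\<forall>c. (\<forall>j\<in>J. (\<Sum>i\<in>I. c i * A i j) = 0) \<longrightarrow> (\<forall>i\<in>I. c i = 0)"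
    and v: "\<And>j. j \<in> J \<Longrightarrow> v j = (if j \<in> Jk then 1 else 0) / sqrt (card Jk)"
  shows "right_singular_vector I J A (largest_singular_value Ik Jk A) v
    \<longleftrightarrow> (\<forall>i\<in>Ik. \<forall>i'\<in>Ik. (\<Sum>j\<in>J. A i j) = (\<Sum>j\<in>J. A i' j))"
proof
  assume "right_singular_vector I J A (largest_singular_value Ik Jk A) v"
  then obtain \<sigma> u where st: "sing_triple I J A \<sigma> u v"
    unfolding right_singular_vector_def by blast
  have "card Jk > 0"
    using assms(2,4,6) finite_subset by (auto simp: card_gt_0_iff)
  hence "(\<Sum>j\<in>J. A i j) = \<sigma>\<^sup>2" if "i \<in> Ik" for i
    by (intro row_sum_eq_sq_if_right_singular_indicator[OF col block rank _ _ st,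
          where \<beta> = "1 / sqrt (card Jk)"])
       (use v that \<open>Ik \<subseteq> I\<close> in auto)
  thus "\<forall>i\<in>Ik. \<forall>i'\<in>Ik. (\<Sum>j\<in>J. A i j) = (\<Sum>j\<in>J. A i' j)"
    by simp
next
  assume eq: "\<forall>i\<in>Ik. \<forall>i'\<in>Ik. (\<Sum>j\<in>J. A i j) = (\<Sum>j\<in>J. A i' j)"
  obtain i0 where "i0 \<in> Ik"
    using \<open>Ik \<noteq> {}\<close> by blast
  with eq have row: "\<And>i. i \<in> Ik \<Longrightarrow> (\<Sum>j\<in>J. A i j) = (\<Sum>j\<in>J. A i0 j)"
    by blast
  show "right_singular_vector I J A (largest_singular_value Ik Jk A) v"
    by (rule right_singular_indicator_if_const_row_sums[OF assms(1-4,6) nonneg col block row v])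
qed

lemma eq_within_classes_iff:
  assumes "\<And>i. i \<in> I \<Longrightarrow> f i \<in> C"
  shows "(\<forall>i\<in>I. \<forall>j\<in>I. f i = f j \<longrightarrow> g i = g j)
    \<longleftrightarrow> (\<forall>k\<in>C. \<forall>i\<in>{i\<in>I. f i = k}. \<forall>j\<in>{i\<in>I. f i = k}. g i = g j)"
  using assms by blast

lemma col_normalize_nonneg:
  assumes "W i j \<ge> 0" and "(\<Sum>l<r. W l j) > 0"
  shows "col_normalize r W i j \<ge> 0"
  using assms by (simp add: col_normalize_def)

lemma sum_col_normalize:
  assumes "(\<Sum>l<r. W l j) \<noteq> 0"
  shows "(\<Sum>i<r. col_normalize r W i j) = 1"
  using assms by (simp add: col_normalize_def flip: sum_divide_distrib)

theorem theorem3: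
  fixes n r K :: nat
    and lab :: "nat \<Rightarrow> nat"
    and G :: "nat \<Rightarrow> nat"
    and W :: "nat \<Rightarrow> nat \<Rightarrow> real"
  assumes lab_range: "\<forall>j<n. lab j \<in> {1..K}"
    and G_range: "\<forall>i<r. G i < n"
    and G_inj: "inj_on G {..<r}"
    and r_le: "r \<le> n"
    and classes_covered: "\<forall>k\<in>{1..K}. \<exists>i<r. lab (G i) = k"
    and W_nonneg: "\<forall>i<r. \<forall>j<n. W i j \<ge> 0"
    and colsum_pos: "\<forall>j<n. (\<Sum>i<r. W i j) > 0"
    and full_row_rank: "\<forall>c :: nat \<Rightarrow> real.
           (\<forall>j<n. (\<Sum>i<r. c i * col_normalize r W i j) = 0) \<longrightarrow> (\<forall>i<r. c i = 0)"
    and W_zero: "\<forall>i<r. \<forall>j<n. lab (G i) \<noteq> lab j \<longrightarrow> W i j = 0"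
  shows "(\<forall>k\<in>{1..K}.
            right_singular_vector {..<r} {..<n} (col_normalize r W)
              (largest_singular_value {i. i < r \<and> lab (G i) = k} {j. j < n \<and> lab j = k}
                 (col_normalize r W))
              (\<lambda>j. (if lab j = k then 1 else 0) / sqrt (real (card {l. l < n \<and> lab l = k}))))
         \<longleftrightarrow>
         (\<forall>i<r. \<forall>j<r. lab (G i) = lab (G j) \<longrightarrow>
            (\<Sum>l<n. col_normalize r W i l) = (\<Sum>l<n. col_normalize r W j l))"
proof -
  define A where "A = col_normalize r W"
  define Ik Jk where "Ik k = {i. i < r \<and> lab (G i) = k}" and "Jk k = {j. j < n \<and> lab j = k}" for k
  have nonneg: "A i j \<ge> 0" if "i \<in> {..<r}" "j \<in> {..<n}" for i j
    using W_nonneg colsum_pos that by (simp add: A_def col_normalize_nonneg)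
  have col: "(\<Sum>i<r. A i j) = 1" if "j \<in> {..<n}" for j
    using colsum_pos that by (fastforce simp: A_def intro: sum_col_normalize)
  have block: "A i j = 0" if "i \<in> {..<r}" "j \<in> {..<n}" "(i \<in> Ik k) \<noteq> (j \<in> Jk k)" for i j k
    using W_zero that by (auto simp: A_def col_normalize_def Ik_def Jk_def)
  have rank: "\<forall>c. (\<forall>j\<in>{..<n}. (\<Sum>i<r. c i * A i j) = 0) \<longrightarrow> (\<forall>i\<in>{..<r}. c i = 0)"
    using full_row_rank by (simp add: A_def)
  have per_class: "right_singular_vector {..<r} {..<n} A (largest_singular_value (Ik k) (Jk k) A)
        (\<lambda>j. (if lab j = k then 1 else 0) / sqrt (card (Jk k)))
      \<longleftrightarrow> (\<forall>i\<in>Ik k. \<forall>i'\<in>Ik k. (\<Sum>l<n. A i l) = (\<Sum>l<n. A i' l))" if "k \<in> {1..K}" for k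
  proof -
    obtain i0 where "i0 < r" "lab (G i0) = k"
      using classes_covered \<open>k \<in> {1..K}\<close> by blast
    hence "i0 \<in> Ik k" "G i0 \<in> Jk k"
      using G_range by (simp_all add: Ik_def Jk_def)
    show ?thesis
      by (rule right_singular_indicator_iff_const_row_sums[OF _ _ _ _ _ _ nonneg col block rank])
         (use \<open>i0 \<in> Ik k\<close> \<open>G i0 \<in> Jk k\<close> in \<open>auto simp: Ik_def Jk_def\<close>)
  qed
  have "(\<forall>i<r. \<forall>j<r. lab (G i) = lab (G j) \<longrightarrow> (\<Sum>l<n. A i l) = (\<Sum>l<n. A j l))
      \<longleftrightarrow> (\<forall>k\<in>{1..K}. \<forall>i\<in>Ik k. \<forall>i'\<in>Ik k. (\<Sum>l<n. A i l) = (\<Sum>l<n. A i' l))"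
    using eq_within_classes_iff[of "{..<r}" "\<lambda>i. lab (G i)" "{1..K}" "\<lambda>i. \<Sum>l<n. A i l"]
      G_range lab_range by (simp add: Ik_def Ball_def)
  with per_class show ?thesis
    unfolding A_def Ik_def Jk_def by simp
qed

end
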